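(* Let $p$ be a prime, $f\in\mathbb{Z}_p[x]$, $n\ge1$, let $\sigma=(x_1,\dots,x_k)$ be a $k$-cycle of $f_n$ (with representatives $x_i\in\mathbb{Z}_p$), and let $\tilde\sigma$ be a lift of $\sigma$ of length $kr$, $r\ge1$. Put $a_n(x)=(f^k)'(x)$, $b_n(x)=(f^k(x)-x)/p^n$, $a_{n+1}(x)=(f^{kr})'(x)$, $b_{n+1}(x)=(f^{kr}(x)-x)/p^{n+1}$. Then for all $1\le i\le k$ and $0\le t\le p-1$, $$a_{n+1}(x_i+p^nt)\equiv a_n(x_i)^r\pmod{p^n},$$ $$p\,b_{n+1}(x_i+p^nt)\equiv t\big(a_n(x_i)^r-1\big)+b_n(x_i)\big(1+a_n(x_i)+\dots+a_n(x_i)^{r-1}\big)\pmod{p^n}.$$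
   Context: $f_n$ is the induced map on $\mathbb{Z}/p^n\mathbb{Z}$, $f_n(x\bmod p^n)=f(x)\bmod p^n$. A $k$-cycle of $f_n$ is a tuple of distinct elements $x_1,\dots,x_k$ with $f_n(x_i)=x_{i+1}$, $f_n(x_k)=x_1$. The lifts of $\sigma$ are the cycles of $f_{n+1}$ contained in $\{y\in\mathbb{Z}/p^{n+1}\mathbb{Z}:y\bmod p^n\in\sigma\}$; their lengths are multiples of $k$. *)

theory Defs
  imports "HOL-Computational_Algebra.Computational_Algebra" "HOL-Library.Cardinality"
begin

text \<open>The prime p is encoded as the cardinality of a type of sort prime_card_type,
  in the style of the AFP mod_ring construction.\<close>

class prime_card_type = finite +
  assumes prime_card_type: "prime (CARD('a))"

lemma card_ge2: "2 \<le> CARD('a::prime_card_type)"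
  using prime_card_type[where 'a='a] prime_ge_2_nat by blast

definition padic_seq :: "int \<Rightarrow> (nat \<Rightarrow> int) \<Rightarrow> bool" where
  "padic_seq q x \<longleftrightarrow> (\<forall>m. 0 \<le> x m \<and> x m < q ^ m \<and> x (Suc m) mod q ^ m = x m)"

typedef (overloaded) ('p::prime_card_type) padic =
  "{x :: nat \<Rightarrow> int. padic_seq (int CARD('p)) x}"
  morphisms rep_padic Abs_padic
  by (rule exI[of _ "\<lambda>_. 0"]) (simp add: padic_seq_def)

setup_lifting type_definition_padic

lemma mod_Suc_pow: "(a::int) mod (q ^ Suc m) mod q ^ m = a mod q ^ m"
  by (simp add: mod_mod_cancel)

lemma padic_seq_op:
  assumes q: "q > 0"
    and hx: "padic_seq q x" and hy: "padic_seq q y"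
    and op: "\<And>m a b. op (a mod q ^ m) (b mod q ^ m) mod q ^ m = op a b mod q ^ m"
  shows "padic_seq q (\<lambda>m. op (x m) (y m) mod q ^ m)"
  unfolding padic_seq_def
proof
  fix m
  have "op (x (Suc m)) (y (Suc m)) mod q ^ Suc m mod q ^ m
      = op (x (Suc m) mod q ^ m) (y (Suc m) mod q ^ m) mod q ^ m"
    by (simp only: mod_Suc_pow op)
  also have "\<dots> = op (x m) (y m) mod q ^ m" using hx hy by (simp add: padic_seq_def)
  finally show "0 \<le> op (x m) (y m) mod q ^ m \<and> op (x m) (y m) mod q ^ m < q ^ m \<and>
      op (x (Suc m)) (y (Suc m)) mod q ^ Suc m mod q ^ m = op (x m) (y m) mod q ^ m"
    using q by simp
qed

instantiation padic :: (prime_card_type) comm_ring_1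
begin

lift_definition zero_padic :: "'a padic" is "\<lambda>m. 0" by (simp add: padic_seq_def)

lift_definition one_padic :: "'a padic" is "\<lambda>m. 1 mod int CARD('a) ^ m"
  unfolding padic_seq_def by (simp only: mod_Suc_pow) simp

lift_definition plus_padic :: "'a padic \<Rightarrow> 'a padic \<Rightarrow> 'a padic"
  is "\<lambda>x y m. (x m + y m) mod int CARD('a) ^ m"
  by (rule padic_seq_op[where op="(+)"]) (simp_all add: mod_add_eq)

lift_definition uminus_padic :: "'a padic \<Rightarrow> 'a padic"
  is "\<lambda>x m. (- x m) mod int CARD('a) ^ m"
  by (rule padic_seq_op[where op="\<lambda>a b. - a"]) (simp_all add: mod_minus_eq)

lift_definition minus_padic :: "'a padic \<Rightarrow> 'a padic \<Rightarrow> 'a padic"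
  is "\<lambda>x y m. (x m - y m) mod int CARD('a) ^ m"
  by (rule padic_seq_op[where op="(-)"]) (simp_all add: mod_diff_eq)

lift_definition times_padic :: "'a padic \<Rightarrow> 'a padic \<Rightarrow> 'a padic"
  is "\<lambda>x y m. (x m * y m) mod int CARD('a) ^ m"
  by (rule padic_seq_op[where op="(*)"]) (simp_all add: mod_mult_eq)

instance
proof
  fix a b c :: "'a padic"
  show "a * b * c = a * (b * c)"
    by transfer (rule ext, metis mod_mult_left_eq mod_mult_right_eq mult.assoc)
  show "a * b = b * a" by transfer (rule ext, metis mult.commute)
  show "1 * a = a"
    by transfer (rule ext, metis mod_mult_left_eq mult_1 mod_pos_pos_trivial padic_seq_def)
  show "a + b + c = a + (b + c)"
    by transfer (rule ext, metis mod_add_left_eq mod_add_right_eq add.assoc)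
  show "a + b = b + a" by transfer (rule ext, metis add.commute)
  show "0 + a = a" by transfer (rule ext, metis add_0 mod_pos_pos_trivial padic_seq_def)
  show "- a + a = 0" by transfer (rule ext, metis mod_add_left_eq add.left_inverse mod_0)
  show "a - b = a + - b" by transfer (rule ext, metis mod_add_right_eq diff_conv_add_uminus)
  show "(a + b) * c = a * c + b * c"
    by transfer (rule ext, metis mod_mult_left_eq mod_add_eq distrib_right)
  show "(0::'a padic) \<noteq> 1"
  proof transfer
    have "(1::int) mod int CARD('a) ^ 1 = 1" using card_ge2[where 'a='a] by simp
    then show "(\<lambda>m. 0::int) \<noteq> (\<lambda>m. 1 mod int CARD('a) ^ m)" by (metis zero_neq_one)
  qed
qed

end

lemma padic_seq_mod_le:
  assumes "padic_seq q x" "(0::int) < q" "m \<le> M"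
  shows "x M mod q ^ m = x m"
  using assms(3)
proof (induction M rule: dec_induct)
  case base
  show ?case using assms(1) by (simp add: padic_seq_def)
next
  case (step M)
  have "x (Suc M) mod q ^ m = x (Suc M) mod q ^ M mod q ^ m"
    using step.hyps(1) by (simp add: mod_mod_cancel le_imp_power_dvd)
  also have "x (Suc M) mod q ^ M = x M" using assms(1) by (simp add: padic_seq_def)
  finally show ?case using step.IH by simp
qed

lemma padic_seq_val:
  assumes "padic_seq q x" "(0::int) < q" "x \<noteq> (\<lambda>m. 0)"
  obtains a where "a \<ge> 1" "\<And>M. M \<ge> a \<Longrightarrow> q ^ (a - 1) dvd x M \<and> \<not> q ^ a dvd x M"
proof -
  have ex: "\<exists>m. x m \<noteq> 0" using assms(3) by auto
  define a where "a = (LEAST m. x m \<noteq> 0)"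
  have xa: "x a \<noteq> 0" unfolding a_def using ex by (rule LeastI_ex)
  have x0: "x 0 = 0" using assms(1) unfolding padic_seq_def
    by (metis int_one_le_iff_zero_less less_le not_less power_0 zero_less_one)
  have a1: "a \<ge> 1" using xa x0 by (cases a) auto
  have xa1: "x (a - 1) = 0"
  proof -
    have "a - 1 < (LEAST m. x m \<noteq> 0)" using a1 unfolding a_def[symmetric] by simp
    then show ?thesis using not_less_Least by blast
  qed
  show ?thesis
  proof (rule that[OF a1])
    fix M assume M: "M \<ge> a"
    have "x M mod q ^ (a - 1) = 0"
      using padic_seq_mod_le[OF assms(1,2), of "a - 1" M] M xa1 by simp
    moreover have "x M mod q ^ a \<noteq> 0"
      using padic_seq_mod_le[OF assms(1,2) M] xa by simp
    ultimately show "q ^ (a - 1) dvd x M \<and> \<not> q ^ a dvd x M" by auto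
  qed
qed

lemma padic_seq_no_zero_div:
  assumes q: "prime (q::int)" and hx: "padic_seq q x" and hy: "padic_seq q y"
    and nx: "x \<noteq> (\<lambda>m. 0)" and ny: "y \<noteq> (\<lambda>m. 0)"
  shows "(\<lambda>m. x m * y m mod q ^ m) \<noteq> (\<lambda>m. 0)"
proof
  assume z: "(\<lambda>m. x m * y m mod q ^ m) = (\<lambda>m. 0)"
  have q0: "q > 0" using q prime_gt_0_int by blast
  obtain a where a1: "a \<ge> 1" and ha: "\<And>M. M \<ge> a \<Longrightarrow> q ^ (a - 1) dvd x M \<and> \<not> q ^ a dvd x M"
    using padic_seq_val[OF hx q0 nx] by blast
  obtain b where b1: "b \<ge> 1" and hb: "\<And>M. M \<ge> b \<Longrightarrow> q ^ (b - 1) dvd y M \<and> \<not> q ^ b dvd y M"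
    using padic_seq_val[OF hy q0 ny] by blast
  define M where "M = a + b"
  obtain u where u: "x M = q ^ (a - 1) * u" using ha[of M] M_def by (auto elim: dvdE)
  obtain w where w: "y M = q ^ (b - 1) * w" using hb[of M] M_def by (auto elim: dvdE)
  have nu: "\<not> q dvd u"
  proof
    assume "q dvd u"
    then have "q ^ (a - 1) * q dvd x M" using u by simp
    then show False using ha[of M] M_def a1 by (simp add: power_Suc2[symmetric])
  qed
  have nw: "\<not> q dvd w"
  proof
    assume "q dvd w"
    then have "q ^ (b - 1) * q dvd y M" using w by simp
    then show False using hb[of M] M_def b1 by (simp add: power_Suc2[symmetric])
  qed
  have "q ^ M dvd x M * y M" using fun_cong[OF z, of M] by (simp add: mod_eq_0_iff_dvd)
  moreover have "q ^ M = q ^ (a - 1) * q ^ (b - 1) * (q * q)"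
  proof -
    have "M = (a - 1) + (b - 1) + 2" using a1 b1 unfolding M_def by simp
    then show ?thesis by (simp only: power_add power2_eq_square)
  qed
  moreover have "x M * y M = q ^ (a - 1) * q ^ (b - 1) * (u * w)" using u w by simp
  ultimately have d: "q ^ (a - 1) * q ^ (b - 1) * (q * q) dvd q ^ (a - 1) * q ^ (b - 1) * (u * w)"
    by simp
  have c0: "q ^ (a - 1) * q ^ (b - 1) \<noteq> 0" using q0 by simp
  have "q * q dvd u * w" using d c0 by (simp only: dvd_mult_cancel_left) simp
  then have "q dvd u * w" using dvd_mult_left by blast
  then show False using nu nw q by (simp add: prime_dvd_mult_iff)
qed

instance padic :: (prime_card_type) idom
proof
  fix a b :: "'a padic"
  show "a \<noteq> 0 \<Longrightarrow> b \<noteq> 0 \<Longrightarrow> a * b \<noteq> 0"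
  proof transfer
    fix x y
    assume "padic_seq (int CARD('a)) x" "padic_seq (int CARD('a)) y" "x \<noteq> (\<lambda>m. 0)" "y \<noteq> (\<lambda>m. 0)"
    then show "(\<lambda>m. x m * y m mod int CARD('a) ^ m) \<noteq> (\<lambda>m. 0)"
      using padic_seq_no_zero_div[of "int CARD('a)" x y] prime_card_type[where 'a='a] by simp
  qed
qed

definition piter :: "'a::comm_semiring_1 poly \<Rightarrow> nat \<Rightarrow> 'a poly" where
  "piter f k = ((\<lambda>g. pcompose f g) ^^ k) [:0, 1:]"

definition pcong :: "nat \<Rightarrow> 'p::prime_card_type padic \<Rightarrow> 'p padic \<Rightarrow> bool" where
  "pcong n a b \<longleftrightarrow> (of_nat CARD('p) :: 'p padic) ^ n dvd (a - b)"

definition is_cycle :: "'p::prime_card_type padic poly \<Rightarrow> nat \<Rightarrow> nat \<Rightarrow> (nat \<Rightarrow> 'p padic) \<Rightarrow> bool" where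
  "is_cycle f n k x \<longleftrightarrow> k \<ge> 1 \<and>
     (\<forall>i<k. \<forall>j<k. i \<noteq> j \<longrightarrow> \<not> pcong n (x i) (x j)) \<and>
     (\<forall>i<k. pcong n (poly f (x i)) (x ((i + 1) mod k)))"

definition is_lift :: "'p::prime_card_type padic poly \<Rightarrow> nat \<Rightarrow> nat \<Rightarrow> (nat \<Rightarrow> 'p padic) \<Rightarrow>
    nat \<Rightarrow> (nat \<Rightarrow> 'p padic) \<Rightarrow> bool" where
  "is_lift f n k x l y \<longleftrightarrow> is_cycle f (Suc n) l y \<and>
     (\<forall>j<l. \<exists>i<k. pcong n (y j) (x i))"

end

theory Submission imports Defs begin

text \<open>Put \<open>g = f\<^sup>k\<close>, \<open>a = g'(x\<^sub>i)\<close> and \<open>g(x\<^sub>i) = x\<^sub>i + p\<^sup>n b\<close>. By Taylor expansion,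
  \<open>g(x\<^sub>i + p\<^sup>n c) \<equiv> x\<^sub>i + p\<^sup>n (b + a c) (mod p\<^sup>2\<^sup>n)\<close>, so the \<open>g\<close>-orbit of
  \<open>z = x\<^sub>i + p\<^sup>n t\<close> stays in \<open>x\<^sub>i + p\<^sup>n \<int>\<^sub>p\<close>, and after \<open>r\<close> steps its \<open>p\<^sup>n\<close>-digit is
  \<open>a\<^sup>r t + b (1 + a + \<dots> + a\<^sup>r\<^sup>-\<^sup>1)\<close> modulo \<open>p\<^sup>n\<close>. Subtracting \<open>z\<close> gives the formula for
  \<open>p b\<^sub>n\<^sub>+\<^sub>1\<close>; by the chain rule \<open>(g\<^sup>r)'(z)\<close> is the product of \<open>g'\<close> along this orbit,
  whose factors are all \<open>\<equiv> a (mod p\<^sup>n)\<close>.\<close>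

lemma diff_dvd_poly_diff: "(x - y) dvd poly p x - poly p (y::'a::comm_ring_1)"
proof (induction p rule: pCons_induct)
  case (pCons c p)
  have "poly (pCons c p) x - poly (pCons c p) y = x * (poly p x - poly p y) + (x - y) * poly p y"
    by (simp add: algebra_simps)
  then show ?case using pCons.IH by (simp add: dvd_add dvd_mult)
qed simp

lemma square_dvd_poly_taylor_remainder:
  "h\<^sup>2 dvd poly p (x + h) - poly p x - h * poly (pderiv p) (x::'a::idom)"
proof (induction p rule: pCons_induct)
  case (pCons c p)
  have "poly (pCons c p) (x + h) - poly (pCons c p) x - h * poly (pderiv (pCons c p)) x
     = x * (poly p (x + h) - poly p x - h * poly (pderiv p) x) + h * (poly p (x + h) - poly p x)"
    by (simp add: pderiv_pCons algebra_simps)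
  moreover have "h\<^sup>2 dvd h * (poly p (x + h) - poly p x)"
    using diff_dvd_poly_diff[of "x + h" x p] by (simp add: power2_eq_square)
  ultimately show ?case using pCons.IH by (simp add: dvd_add dvd_mult)
qed simp

lemma dvd_prod_diff_power:
  fixes u :: "nat \<Rightarrow> 'a::comm_ring_1"
  assumes "\<And>j. j < s \<Longrightarrow> m dvd u j - a"
  shows "m dvd (\<Prod>j<s. u j) - a ^ s"
  using assms
proof (induction s)
  case (Suc s)
  have "(\<Prod>j<Suc s. u j) - a ^ Suc s = (u s - a) * (\<Prod>j<s. u j) + a * ((\<Prod>j<s. u j) - a ^ s)"
    by (simp add: algebra_simps)
  then show ?case using Suc by (simp add: dvd_add dvd_mult dvd_mult2)
qed simp

lemma piter_0: "piter f 0 = [:0, 1:]"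
  by (simp add: piter_def)

lemma piter_Suc: "piter f (Suc k) = pcompose f (piter f k)"
  by (simp add: piter_def)

lemma poly_piter: "poly (piter f k) = poly f ^^ k"
  by (induction k) (auto simp: piter_0 piter_Suc poly_pcompose)

lemma pcompose_idL: "pcompose [:0, 1:] p = (p::'a::comm_semiring_1 poly)"
  by (simp add: pcompose_pCons)

lemma piter_add: "piter f (a + b) = pcompose (piter f a) (piter f b)"
  by (induction a) (simp_all add: piter_0 piter_Suc pcompose_idL pcompose_assoc)

lemma piter_mult: "piter f (k * r) = piter (piter f k) r"
  by (induction r) (simp_all add: piter_0 piter_Suc piter_add)

lemma poly_pderiv_piter:
  "poly (pderiv (piter g r)) w = (\<Prod>j<r. poly (pderiv g) ((poly g ^^ j) w))"
  by (induction r) (simp_all add: piter_0 piter_Suc pderiv_pCons pderiv_pcompose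
      poly_pcompose poly_piter mult.commute)

lemma funpow_poly_linear_approx:
  fixes g :: "'a::idom poly"
  assumes g: "poly g X = X + m * b"
  shows "\<exists>c. (poly g ^^ j) (X + m * t) = X + m * c \<and>
     m dvd c - (poly (pderiv g) X ^ j * t + b * (\<Sum>l<j. poly (pderiv g) X ^ l))"
proof (induction j)
  case 0
  show ?case by (rule exI[of _ t]) simp
next
  case (Suc j)
  define a where "a = poly (pderiv g) X"
  from Suc.IH obtain c where c: "(poly g ^^ j) (X + m * t) = X + m * c"
    and c_cong: "m dvd c - (a ^ j * t + b * (\<Sum>l<j. a ^ l))"
    unfolding a_def by blast
  have "m\<^sup>2 dvd (m * c)\<^sup>2" by (simp add: power_mult_distrib)
  then have "m\<^sup>2 dvd poly g (X + m * c) - poly g X - m * c * a"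
    using square_dvd_poly_taylor_remainder[of "m * c" g X] unfolding a_def
    by (auto intro: dvd_trans simp: mult_ac)
  then obtain e where e: "poly g (X + m * c) - poly g X - m * c * a = m\<^sup>2 * e"
    by (auto elim: dvdE)
  have step: "(poly g ^^ Suc j) (X + m * t) = X + m * (b + a * c + m * e)"
    using c e g by (simp add: algebra_simps power2_eq_square)
  have "(\<Sum>l<Suc j. a ^ l) = 1 + a * (\<Sum>l<j. a ^ l)"
    by (simp only: sum.lessThan_Suc_shift power_0 power_Suc sum_distrib_left)
  then have digit_diff: "(b + a * c + m * e) - (a ^ Suc j * t + b * (\<Sum>l<Suc j. a ^ l))
      = a * (c - (a ^ j * t + b * (\<Sum>l<j. a ^ l))) + m * e"
    by (simp add: algebra_simps)
  have "m dvd (b + a * c + m * e) - (a ^ Suc j * t + b * (\<Sum>l<Suc j. a ^ l))"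
    unfolding digit_diff using c_cong by (intro dvd_add dvd_mult dvd_triv_left)
  then show ?case using step unfolding a_def by blast
qed

lemma pderiv_piter_cong:
  fixes g :: "'a::idom poly"
  assumes "poly g X = X + m * b"
  shows "m dvd poly (pderiv (piter g r)) (X + m * t) - poly (pderiv g) X ^ r"
  unfolding poly_pderiv_piter
proof (rule dvd_prod_diff_power)
  fix j
  obtain c where "(poly g ^^ j) (X + m * t) = X + m * c"
    using funpow_poly_linear_approx[OF assms] by blast
  then show "m dvd poly (pderiv g) ((poly g ^^ j) (X + m * t)) - poly (pderiv g) X"
    using diff_dvd_poly_diff[of "X + m * c" X "pderiv g"] by (auto intro: dvd_trans)
qed

lemma funpow_poly_displacement_cong:
  fixes g :: "'a::idom poly"
  assumes "poly g X = X + m * b" and "m \<noteq> 0"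
    and d: "m * d = (poly g ^^ r) (X + m * t) - (X + m * t)"
  shows "m dvd d - (t * (poly (pderiv g) X ^ r - 1) + b * (\<Sum>j<r. poly (pderiv g) X ^ j))"
proof -
  obtain c where c: "(poly g ^^ r) (X + m * t) = X + m * c"
    and c_cong: "m dvd c - (poly (pderiv g) X ^ r * t + b * (\<Sum>l<r. poly (pderiv g) X ^ l))"
    using funpow_poly_linear_approx[OF assms(1)] by blast
  have "m * d = m * (c - t)" using d c by (simp add: algebra_simps)
  then have "d = c - t" using \<open>m \<noteq> 0\<close> by simp
  then show ?thesis using c_cong by (simp add: algebra_simps)
qed

lemma rep_padic_of_nat:
  "rep_padic (of_nat j :: 'p::prime_card_type padic) m = int j mod int CARD('p) ^ m"
  by (induction j) (simp_all add: zero_padic.rep_eq plus_padic.rep_eq one_padic.rep_eq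
      mod_add_eq add.commute)

lemma of_nat_card_padic_nonzero: "(of_nat CARD('p) :: 'p::prime_card_type padic) \<noteq> 0"
proof
  assume "(of_nat CARD('p) :: 'p padic) = 0"
  then have "rep_padic (of_nat CARD('p) :: 'p padic) 2 = rep_padic (0::'p padic) 2" by simp
  then have "int CARD('p) mod int CARD('p) ^ 2 = 0"
    by (simp add: rep_padic_of_nat zero_padic.rep_eq)
  moreover have "0 < int CARD('p)" "int CARD('p) < int CARD('p) ^ 2"
    using card_ge2[where 'a='p] by (simp_all add: power2_eq_square)
  ultimately show False by simp
qed

lemma pcong_trans:
  assumes "pcong n a b" and "pcong n b c"
  shows "pcong n a c"
proof -
  have "a - c = (a - b) + (b - c)" by simp
  then show ?thesis using assms unfolding pcong_def by (metis dvd_add)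
qed

lemma is_cycle_funpow_pcong:
  assumes cyc: "is_cycle f n k x" and "i < k"
  shows "pcong n ((poly f ^^ j) (x i)) (x ((i + j) mod k))"
proof (induction j)
  case 0
  then show ?case using \<open>i < k\<close> by (simp add: pcong_def)
next
  case (Suc j)
  have "pcong n ((poly f ^^ Suc j) (x i)) (poly f (x ((i + j) mod k)))"
    using Suc.IH diff_dvd_poly_diff[of "(poly f ^^ j) (x i)" "x ((i + j) mod k)" f]
    unfolding pcong_def by (auto intro: dvd_trans)
  moreover have "pcong n (poly f (x ((i + j) mod k))) (x (((i + j) mod k + 1) mod k))"
    using cyc by (simp add: is_cycle_def)
  moreover have "((i + j) mod k + 1) mod k = (i + Suc j) mod k"
    by (simp add: mod_Suc_eq)
  ultimately show ?case using pcong_trans by metis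
qed

text \<open>Only the cycle property \<open>f\<^sup>k(x\<^sub>i) \<equiv> x\<^sub>i (mod p\<^sup>n)\<close> is used: the congruences hold at
  every point \<open>x\<^sub>i + p\<^sup>n t\<close>, whether or not it lies on the lift.\<close>

theorem lemma2p3:
  fixes f :: "'p::prime_card_type padic poly"
    and n k r :: nat
    and x y :: "nat \<Rightarrow> 'p padic"
  assumes "n \<ge> 1"
    and "is_cycle f n k x"
    and "r \<ge> 1"
    and "is_lift f n k x (k * r) y"
  shows "\<forall>i<k. \<forall>t\<in>{0..CARD('p) - 1}.
     (let z = x i + (of_nat CARD('p)) ^ n * of_nat t;
          an = poly (pderiv (piter f k)) (x i);
          an1 = poly (pderiv (piter f (k * r))) z
      in pcong n an1 (an ^ r) \<and>
         (\<forall>bn pbn1. (of_nat CARD('p)) ^ n * bn = (poly f ^^ k) (x i) - x i \<longrightarrow>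
                     (of_nat CARD('p)) ^ n * pbn1 = (poly f ^^ (k * r)) z - z \<longrightarrow>
                     pcong n pbn1 (of_nat t * (an ^ r - 1) + bn * (\<Sum>j<r. an ^ j))))"
  unfolding Let_def
proof (intro allI impI ballI conjI)
  fix i t assume "i < k"
  define m where "m = (of_nat CARD('p) :: 'p padic) ^ n"
  define g where "g = piter f k"
  have "m dvd poly g (x i) - x i"
    using is_cycle_funpow_pcong[OF assms(2) \<open>i < k\<close>, of k] \<open>i < k\<close>
    by (simp add: pcong_def m_def g_def poly_piter)
  then obtain b where "poly g (x i) = x i + m * b"
    by (metis dvdE diff_add_cancel add.commute)
  from pderiv_piter_cong[OF this, of r "of_nat t"]
  show "pcong n (poly (pderiv (piter f (k * r))) (x i + of_nat CARD('p) ^ n * of_nat t))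
      (poly (pderiv (piter f k)) (x i) ^ r)"
    by (simp add: pcong_def m_def g_def piter_mult)
  fix bn pbn1
  assume bn: "of_nat CARD('p) ^ n * bn = (poly f ^^ k) (x i) - x i"
    and pbn1: "of_nat CARD('p) ^ n * pbn1 = (poly f ^^ (k * r)) (x i + of_nat CARD('p) ^ n * of_nat t)
      - (x i + of_nat CARD('p) ^ n * of_nat t)"
  have "poly g (x i) = x i + m * bn"
    using bn by (simp add: m_def g_def poly_piter algebra_simps)
  moreover have "m \<noteq> 0"
    using of_nat_card_padic_nonzero[where 'p='p] by (simp add: m_def)
  moreover have "m * pbn1 = (poly g ^^ r) (x i + m * of_nat t) - (x i + m * of_nat t)"
    using pbn1 by (simp add: m_def g_def poly_piter funpow_mult)
  ultimately show "pcong n pbn1 (of_nat t * (poly (pderiv (piter f k)) (x i) ^ r - 1) +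
      bn * (\<Sum>j<r. poly (pderiv (piter f k)) (x i) ^ j))"
    unfolding pcong_def m_def[symmetric] g_def[symmetric]
    by (rule funpow_poly_displacement_cong)
qed

end
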